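(* Let $G$ be a group with nontrivial center $Z(G)\neq\{1\}$. Then for every subgroup $A\subseteq\operatorname{Aut}(G)$, the $\mathcal{L}(A)$-group $G$ is not an $\mathcal{L}(A)$-equational domain.
   Context: For a subgroup $A\subseteq\operatorname{Aut}(G)$, $\mathcal{L}(A)=\{\cdot,{}^{-1},1\}\cup\{\phi\mid\phi\in A\}$ is the group language with a unary function symbol for each $\phi\in A$, interpreted as $\phi$. $\mathcal{L}(A)$-equations are $t(X)=1$ with $t$ an $\mathcal{L}(A)$-term (equivalently a product $\phi_1(x_{i_1}^{\varepsilon_1})\cdots\phi_k(x_{i_k}^{\varepsilon_k})$, $\phi_j\in A$, $\varepsilon_j=\pm1$); systems are arbitrary sets of equations and $V_G(S)$ is the solution set. A subset of $G^n$ is $\mathcal{L}(A)$-algebraic if it is $V_G(S)$ for some $\mathcal{L}(A)$-system $S$ in $n$ variables. $G$ is an $\mathcal{L}(A)$-equational domain if for every $n$ the union of any two $\mathcal{L}(A)$-algebraic subsets of $G^n$ is $\mathcal{L}(A)$-algebraic. *)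

theory Defs
  imports "HOL-Algebra.Algebra"
begin

definition group_center :: "('a, 'b) monoid_scheme \<Rightarrow> 'a set" where
  "group_center G = {z \<in> carrier G. \<forall>g \<in> carrier G. z \<otimes>\<^bsub>G\<^esub> g = g \<otimes>\<^bsub>G\<^esub> z}"

text \<open>Terms of the language L(A): group terms with a unary function symbol for each
  automorphism; variables are indexed by natural numbers.\<close>
datatype 'a lterm =
    LVar nat
  | LOne
  | LMul "'a lterm" "'a lterm"
  | LInv "'a lterm"
  | LApp "'a \<Rightarrow> 'a" "'a lterm"

fun lterm_ok :: "('a \<Rightarrow> 'a) set \<Rightarrow> nat \<Rightarrow> 'a lterm \<Rightarrow> bool" where
  "lterm_ok A n (LVar i) = (i < n)"
| "lterm_ok A n LOne = True"
| "lterm_ok A n (LMul s t) = (lterm_ok A n s \<and> lterm_ok A n t)"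
| "lterm_ok A n (LInv t) = lterm_ok A n t"
| "lterm_ok A n (LApp \<phi> t) = (\<phi> \<in> A \<and> lterm_ok A n t)"

fun leval :: "('a, 'b) monoid_scheme \<Rightarrow> 'a list \<Rightarrow> 'a lterm \<Rightarrow> 'a" where
  "leval G xs (LVar i) = xs ! i"
| "leval G xs LOne = \<one>\<^bsub>G\<^esub>"
| "leval G xs (LMul s t) = leval G xs s \<otimes>\<^bsub>G\<^esub> leval G xs t"
| "leval G xs (LInv t) = inv\<^bsub>G\<^esub> (leval G xs t)"
| "leval G xs (LApp \<phi> t) = \<phi> (leval G xs t)"

definition gpower :: "('a, 'b) monoid_scheme \<Rightarrow> nat \<Rightarrow> 'a list set" where
  "gpower G n = {xs. length xs = n \<and> set xs \<subseteq> carrier G}"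

text \<open>An L(A)-system in n variables: an arbitrary set of equations t = 1 (represented by t).\<close>
definition lsystem :: "('a \<Rightarrow> 'a) set \<Rightarrow> nat \<Rightarrow> 'a lterm set \<Rightarrow> bool" where
  "lsystem A n S \<longleftrightarrow> (\<forall>t \<in> S. lterm_ok A n t)"

definition solset :: "('a, 'b) monoid_scheme \<Rightarrow> nat \<Rightarrow> 'a lterm set \<Rightarrow> 'a list set" where
  "solset G n S = {xs \<in> gpower G n. \<forall>t \<in> S. leval G xs t = \<one>\<^bsub>G\<^esub>}"

definition algebraic :: "('a, 'b) monoid_scheme \<Rightarrow> ('a \<Rightarrow> 'a) set \<Rightarrow> nat \<Rightarrow> 'a list set \<Rightarrow> bool" where
  "algebraic G A n Y \<longleftrightarrow> (\<exists>S. lsystem A n S \<and> Y = solset G n S)"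

definition equational_domain :: "('a, 'b) monoid_scheme \<Rightarrow> ('a \<Rightarrow> 'a) set \<Rightarrow> bool" where
  "equational_domain G A \<longleftrightarrow>
     (\<forall>n Y1 Y2. algebraic G A n Y1 \<and> algebraic G A n Y2 \<longrightarrow> algebraic G A n (Y1 \<union> Y2))"

end

theory Submission
  imports Defs
begin

text \<open>Let \<open>z \<noteq> 1\<close> be central. Automorphisms preserve the centre, so for every
  \<open>\<L>(A)\<close>-term \<open>t\<close>, every central tuple \<open>c\<close> and every tuple \<open>x\<close> we have
  \<open>t(c x) = t(c) t(x)\<close>. Hence an equation vanishing at \<open>(z, 1)\<close> and \<open>(1, z)\<close> also
  vanishes at \<open>(z, z)\<close>, so the union of the axes \<open>{x = 1} \<union> {y = 1}\<close> in \<open>G\<^sup>2\<close>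
  is not algebraic.\<close>

lemma carrier_AutoGroup: "carrier (AutoGroup G) = auto G"
  by (simp add: AutoGroup_def BijGroup_def)

lemma auto_image_carrier: "\<phi> \<in> auto G \<Longrightarrow> \<phi> ` carrier G = carrier G"
  by (simp add: auto_def Bij_def bij_betw_def)

context group
begin

lemma group_center_commute: "z \<in> group_center G \<Longrightarrow> g \<in> carrier G \<Longrightarrow> z \<otimes> g = g \<otimes> z"
  by (simp add: group_center_def)

lemma group_center_subset_carrier: "group_center G \<subseteq> carrier G"
  by (auto simp: group_center_def)

lemma subgroup_group_center: "subgroup (group_center G) G"
proof (rule subgroupI)
  fix a b assume a: "a \<in> group_center G" and b: "b \<in> group_center G"
  then have ab: "a \<in> carrier G" "b \<in> carrier G" using group_center_subset_carrier by auto
  show "inv a \<in> group_center G" unfolding group_center_def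
  proof (intro CollectI conjI ballI)
    fix g assume g: "g \<in> carrier G"
    have "inv (a \<otimes> inv g) = inv (inv g \<otimes> a)"
      using group_center_commute[OF a inv_closed[OF g]] by simp
    then show "inv a \<otimes> g = g \<otimes> inv a" using ab g by (simp add: inv_mult_group)
  qed (use ab in simp)
  show "a \<otimes> b \<in> group_center G" unfolding group_center_def
  proof (intro CollectI conjI ballI)
    fix g assume g: "g \<in> carrier G"
    have "a \<otimes> b \<otimes> g = a \<otimes> (g \<otimes> b)" using ab g group_center_commute[OF b g] by (simp add: m_assoc)
    also have "\<dots> = g \<otimes> (a \<otimes> b)" using ab g group_center_commute[OF a g] by (simp flip: m_assoc)
    finally show "a \<otimes> b \<otimes> g = g \<otimes> (a \<otimes> b)" .
  qed (use ab in simp)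
qed (auto simp: group_center_def)

lemma auto_group_center: "\<phi> \<in> auto G \<Longrightarrow> \<phi> ` group_center G \<subseteq> group_center G"
proof clarify
  fix z assume \<phi>: "\<phi> \<in> auto G" and z: "z \<in> group_center G"
  then have hom: "\<phi> \<in> hom G G" and zc: "z \<in> carrier G"
    using group_center_subset_carrier by (auto simp: auto_def)
  have "\<phi> z \<otimes> g = g \<otimes> \<phi> z" if "g \<in> carrier G" for g
  proof -
    obtain k where "k \<in> carrier G" "g = \<phi> k"
      using auto_image_carrier[OF \<phi>] \<open>g \<in> carrier G\<close> by blast
    then show ?thesis using hom zc z by (simp flip: hom_mult add: group_center_commute)
  qed
  then show "\<phi> z \<in> group_center G" using hom zc by (simp add: group_center_def hom_in_carrier)
qed

lemma leval_in_subgroup: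
  assumes "subgroup H G" and "\<And>\<phi>. \<phi> \<in> A \<Longrightarrow> \<phi> ` H \<subseteq> H"
    and "set xs \<subseteq> H" and "lterm_ok A (length xs) t"
  shows "leval G xs t \<in> H"
  using assms(4)
proof (induction t)
  case (LVar i)
  then show ?case using assms(3) by (auto intro: nth_mem)
qed (use assms(1,2) subgroup.one_closed subgroup.m_closed subgroup.m_inv_closed in auto)

lemma leval_in_carrier:
  "A \<subseteq> auto G \<Longrightarrow> set xs \<subseteq> carrier G \<Longrightarrow> lterm_ok A (length xs) t \<Longrightarrow> leval G xs t \<in> carrier G"
  by (rule leval_in_subgroup[where A = A, OF subgroup_self]) (use auto_image_carrier in blast)

lemma leval_in_group_center:
  "A \<subseteq> auto G \<Longrightarrow> set zs \<subseteq> group_center G \<Longrightarrow> lterm_ok A (length zs) t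
    \<Longrightarrow> leval G zs t \<in> group_center G"
  by (rule leval_in_subgroup[where A = A, OF subgroup_group_center]) (auto dest: auto_group_center)

lemma leval_mult_central:
  assumes A: "A \<subseteq> auto G" and zs: "set zs \<subseteq> group_center G" and ys: "set ys \<subseteq> carrier G"
    and len: "length ys = length zs" and "lterm_ok A (length zs) t"
  shows "leval G (map2 (\<otimes>) zs ys) t = leval G zs t \<otimes> leval G ys t"
  using assms(5)
proof (induction t)
  case (LVar i)
  then show ?case using len by simp
next
  case LOne
  then show ?case by simp
next
  case (LMul s t)
  let ?a = "leval G zs s" and ?b = "leval G ys s" and ?c = "leval G zs t" and ?d = "leval G ys t"
  have ctr: "?c \<in> group_center G" using LMul.prems leval_in_group_center[OF A zs] by simp
  have car: "?a \<in> carrier G" "?b \<in> carrier G" "?c \<in> carrier G" "?d \<in> carrier G"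
    using LMul.prems leval_in_carrier[OF A] zs ys len group_center_subset_carrier
    by auto
  have "?a \<otimes> ?b \<otimes> (?c \<otimes> ?d) = ?a \<otimes> (?b \<otimes> ?c \<otimes> ?d)" using car by (simp add: m_assoc)
  also have "\<dots> = ?a \<otimes> (?c \<otimes> ?b \<otimes> ?d)" using group_center_commute[OF ctr car(2)] by simp
  also have "\<dots> = ?a \<otimes> ?c \<otimes> (?b \<otimes> ?d)" using car by (simp add: m_assoc)
  finally show ?case using LMul by simp
next
  case (LInv t)
  let ?a = "leval G zs t" and ?b = "leval G ys t"
  have ctr: "inv ?a \<in> group_center G"
    using LInv.prems leval_in_group_center[OF A zs] subgroup.m_inv_closed[OF subgroup_group_center]
    by simp
  have car: "?a \<in> carrier G" "?b \<in> carrier G"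
    using LInv.prems leval_in_carrier[OF A] zs ys len group_center_subset_carrier
    by auto
  have "inv (?a \<otimes> ?b) = inv ?b \<otimes> inv ?a" using car by (simp add: inv_mult_group)
  also have "\<dots> = inv ?a \<otimes> inv ?b" using group_center_commute[OF ctr] car by simp
  finally show ?case using LInv by simp
next
  case (LApp \<phi> t)
  then have "\<phi> \<in> hom G G" using A by (auto simp: auto_def)
  moreover have "leval G zs t \<in> carrier G" "leval G ys t \<in> carrier G"
    using LApp.prems leval_in_carrier[OF A] zs ys len group_center_subset_carrier
    by auto
  ultimately show ?case using LApp by (simp add: hom_mult)
qed

lemma solset_mult_central:
  assumes "A \<subseteq> auto G" and "lsystem A n S"
    and "zs \<in> solset G n S" and "set zs \<subseteq> group_center G" and "ys \<in> solset G n S"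
  shows "map2 (\<otimes>) zs ys \<in> solset G n S"
proof -
  have zs: "set zs \<subseteq> carrier G" using assms(4) group_center_subset_carrier by blast
  have "leval G (map2 (\<otimes>) zs ys) t = \<one>" if "t \<in> S" for t
    using assms that leval_mult_central[OF assms(1,4)]
    by (simp add: solset_def gpower_def lsystem_def)
  moreover have "set (map2 (\<otimes>) zs ys) \<subseteq> carrier G"
    using zs assms(5) by (fastforce simp: solset_def gpower_def set_zip)
  ultimately show ?thesis using assms(3,5) by (simp add: solset_def gpower_def)
qed

lemma coordinate_axes_union_not_algebraic:
  assumes A: "A \<subseteq> auto G" and z: "z \<in> group_center G" "z \<noteq> \<one>"
  shows "\<not> algebraic G A 2 (solset G 2 {LVar 0} \<union> solset G 2 {LVar 1})"
proof
  assume "algebraic G A 2 (solset G 2 {LVar 0} \<union> solset G 2 {LVar 1})"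
  then obtain S where S: "lsystem A 2 S"
    and axes: "solset G 2 {LVar 0} \<union> solset G 2 {LVar 1} = solset G 2 S"
    by (auto simp: algebraic_def)
  have zc: "z \<in> carrier G" using z(1) group_center_subset_carrier by blast
  have "[z, \<one>] \<in> solset G 2 {LVar 1}" "[\<one>, z] \<in> solset G 2 {LVar 0}"
    using zc by (auto simp: solset_def gpower_def)
  then have "[z, \<one>] \<in> solset G 2 S" "[\<one>, z] \<in> solset G 2 S"
    by (auto simp flip: axes)
  moreover have "set [z, \<one>] \<subseteq> group_center G"
    using z(1) subgroup.one_closed[OF subgroup_group_center] by simp
  ultimately have "map2 (\<otimes>) [z, \<one>] [\<one>, z] \<in> solset G 2 S"
    using solset_mult_central[OF A S] by blast
  then have "[z, z] \<in> solset G 2 {LVar 0} \<union> solset G 2 {LVar 1}"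
    unfolding axes using zc by simp
  then show False using z(2) by (auto simp: solset_def)
qed

end

theorem corollary1:
  fixes G :: "('a, 'b) monoid_scheme" and A :: "('a \<Rightarrow> 'a) set"
  assumes "group G"
    and "group_center G \<noteq> {\<one>\<^bsub>G\<^esub>}"
    and "subgroup A (AutoGroup G)"
  shows "\<not> equational_domain G A"
proof
  assume ed: "equational_domain G A"
  interpret group G by fact
  obtain z where z: "z \<in> group_center G" "z \<noteq> \<one>\<^bsub>G\<^esub>"
    using assms(2) subgroup.one_closed[OF subgroup_group_center] by blast
  have A: "A \<subseteq> auto G"
    using subgroup.subset[OF assms(3)] by (simp add: carrier_AutoGroup)
  have "algebraic G A 2 (solset G 2 {LVar i})" if "i < 2" for i
    unfolding algebraic_def lsystem_def using that by (intro exI[of _ "{LVar i}"]) simp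
  then have "algebraic G A 2 (solset G 2 {LVar 0} \<union> solset G 2 {LVar 1})"
    using ed by (simp add: equational_domain_def)
  with coordinate_axes_union_not_algebraic[OF A z] show False ..
qed

end
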